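(* Let $\chi:VB_n\to M_n$ be the homomorphism with $\chi(\sigma_i)=s_i$, $\chi(\rho_i)=t_i$ ($i=1,\dots,n-1$), and let $\eta_1,\eta_2:M_n\to S_n$ be the homomorphisms with $\eta_1(s_i)=1$, $\eta_1(t_i)=(i\ i{+}1)$, and $\eta_2(s_i)=\eta_2(t_i)=(i\ i{+}1)$. Then: (i) $H_n=\ker(\eta_1\circ\chi)$; (ii) $VP_n=\ker(\eta_2\circ\chi)$; (iii) $H_n\cap VP_n=\ker\chi$.
   Context: The virtual braid group $VB_n$ is the group with generators $\sigma_i,\rho_i$ ($i=1,\dots,n-1$) and defining relations: $\sigma_i\sigma_{i+1}\sigma_i=\sigma_{i+1}\sigma_i\sigma_{i+1}$ ($1\le i\le n-2$); $\sigma_i\sigma_j=\sigma_j\sigma_i$ ($|i-j|\geq 2$); $\rho_i\rho_{i+1}\rho_i=\rho_{i+1}\rho_i\rho_{i+1}$ ($1\le i\le n-2$); $\rho_i\rho_j=\rho_j\rho_i$ ($|i-j|\geq 2$); $\rho_i^2=1$; $\sigma_i\rho_j=\rho_j\sigma_i$ ($|i-j|\geq2$); $\rho_i\rho_{i+1}\sigma_i=\sigma_{i+1}\rho_i\rho_{i+1}$ ($1\le i\le n-2$). $M_n=S_n\rtimes S_n$, where the second factor acts on the first by conjugation; $s_i$ is the transposition $(i\ i{+}1)$ in the first factor and $t_i$ the transposition $(i\ i{+}1)$ in the second factor. $H_n$ is the normal closure of $\langle\sigma_1,\dots,\sigma_{n-1}\rangle$ in $VB_n$. $VP_n$ is the kernel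 of $\nu:VB_n\to S_n$, $\nu(\sigma_i)=\nu(\rho_i)=(i\ i{+}1)$. The kernel $\ker\chi$ is called the extended pure braid group $EP_n$. *)

theory Defs
  imports "HOL-Algebra.Sym_Groups"
begin

datatype vgen = Sig nat | Rho nat

text \<open>A letter is a generator together with an exponent flag: (False, g) is g, (True, g) is g^-1.\<close>
type_synonym vletter = "bool \<times> vgen"
type_synonym vword = "vletter list"

definition vb_letters :: "nat \<Rightarrow> vletter set" where
  "vb_letters n = {(e, g) | e g i. (g = Sig i \<or> g = Rho i) \<and> 1 \<le> i \<and> i < n}"

fun linv :: "vletter \<Rightarrow> vletter" where
  "linv (e, g) = (\<not> e, g)"

abbreviation sg :: "nat \<Rightarrow> vword" where "sg i \<equiv> [(False, Sig i)]"
abbreviation rh :: "nat \<Rightarrow> vword" where "rh i \<equiv> [(False, Rho i)]"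

definition vb_relators :: "nat \<Rightarrow> (vword \<times> vword) set" where
  "vb_relators n =
     {(sg i @ sg (i+1) @ sg i, sg (i+1) @ sg i @ sg (i+1)) | i. 1 \<le> i \<and> i + 1 < n}
   \<union> {(sg i @ sg j, sg j @ sg i) | i j. 1 \<le> i \<and> i < n \<and> 1 \<le> j \<and> j < n \<and> (i + 2 \<le> j \<or> j + 2 \<le> i)}
   \<union> {(rh i @ rh (i+1) @ rh i, rh (i+1) @ rh i @ rh (i+1)) | i. 1 \<le> i \<and> i + 1 < n}
   \<union> {(rh i @ rh j, rh j @ rh i) | i j. 1 \<le> i \<and> i < n \<and> 1 \<le> j \<and> j < n \<and> (i + 2 \<le> j \<or> j + 2 \<le> i)}
   \<union> {(rh i @ rh i, []) | i. 1 \<le> i \<and> i < n}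
   \<union> {(sg i @ rh j, rh j @ sg i) | i j. 1 \<le> i \<and> i < n \<and> 1 \<le> j \<and> j < n \<and> (i + 2 \<le> j \<or> j + 2 \<le> i)}
   \<union> {(rh i @ rh (i+1) @ sg i, sg (i+1) @ rh i @ rh (i+1)) | i. 1 \<le> i \<and> i + 1 < n}"

inductive vb_eq :: "nat \<Rightarrow> vword \<Rightarrow> vword \<Rightarrow> bool" for n where
  rel: "(l, r) \<in> vb_relators n \<Longrightarrow> u \<in> lists (vb_letters n) \<Longrightarrow> v \<in> lists (vb_letters n)
        \<Longrightarrow> vb_eq n (u @ l @ v) (u @ r @ v)"
| cancel: "a \<in> vb_letters n \<Longrightarrow> u \<in> lists (vb_letters n) \<Longrightarrow> v \<in> lists (vb_letters n)
        \<Longrightarrow> vb_eq n (u @ [a, linv a] @ v) (u @ v)"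
| refl: "w \<in> lists (vb_letters n) \<Longrightarrow> vb_eq n w w"
| sym: "vb_eq n w w' \<Longrightarrow> vb_eq n w' w"
| trans: "vb_eq n w w' \<Longrightarrow> vb_eq n w' w'' \<Longrightarrow> vb_eq n w w''"

definition vb_class :: "nat \<Rightarrow> vword \<Rightarrow> vword set" where
  "vb_class n w = {w'. vb_eq n w w'}"

definition rep :: "vword set \<Rightarrow> vword" where
  "rep X = (SOME w. w \<in> X)"

definition VB :: "nat \<Rightarrow> vword set monoid" where
  "VB n = \<lparr> carrier = vb_class n ` lists (vb_letters n),
            mult = (\<lambda>X Y. vb_class n (rep X @ rep Y)),
            one = vb_class n [] \<rparr>"

definition vsigma :: "nat \<Rightarrow> nat \<Rightarrow> vword set" where
  "vsigma n i = vb_class n (sg i)"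

definition normal_closure :: "('a, 'm) monoid_scheme \<Rightarrow> 'a set \<Rightarrow> 'a set" where
  "normal_closure G S = \<Inter> {N. N \<lhd> G \<and> S \<subseteq> N}"

definition H_sub :: "nat \<Rightarrow> vword set set" where
  "H_sub n = normal_closure (VB n) {vsigma n i | i. 1 \<le> i \<and> i < n}"

definition word_eval :: "('a, 'm) monoid_scheme \<Rightarrow> (vgen \<Rightarrow> 'a) \<Rightarrow> vword \<Rightarrow> 'a" where
  "word_eval G f w = foldr (\<lambda>(e, g) acc. mult G (if e then m_inv G (f g) else f g) acc) w (one G)"

definition hom_from_gens :: "nat \<Rightarrow> ('a, 'm) monoid_scheme \<Rightarrow> (vgen \<Rightarrow> 'a) \<Rightarrow> vword set \<Rightarrow> 'a" where
  "hom_from_gens n G f X = word_eval G f (rep X)"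

abbreviation tr :: "nat \<Rightarrow> nat \<Rightarrow> nat" where "tr i \<equiv> Transposition.transpose i (i + 1)"

text \<open>M_n = S_n \<rtimes> S_n, second factor acting on the first by conjugation:
  (a, b) (c, d) = (a (b c b^-1), b d).\<close>
definition M :: "nat \<Rightarrow> ((nat \<Rightarrow> nat) \<times> (nat \<Rightarrow> nat)) monoid" where
  "M n = \<lparr> carrier = {(a, b). a permutes {1..n} \<and> b permutes {1..n}},
           mult = (\<lambda>(a, b) (c, d). (a \<circ> (b \<circ> c \<circ> Hilbert_Choice.inv b), b \<circ> d)),
           one = (id, id) \<rparr>"

definition s_el :: "nat \<Rightarrow> (nat \<Rightarrow> nat) \<times> (nat \<Rightarrow> nat)" where "s_el i = (tr i, id)"
definition t_el :: "nat \<Rightarrow> (nat \<Rightarrow> nat) \<times> (nat \<Rightarrow> nat)" where "t_el i = (id, tr i)"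

fun chi_gen :: "vgen \<Rightarrow> (nat \<Rightarrow> nat) \<times> (nat \<Rightarrow> nat)" where
  "chi_gen (Sig i) = s_el i"
| "chi_gen (Rho i) = t_el i"

fun nu_gen :: "vgen \<Rightarrow> nat \<Rightarrow> nat" where
  "nu_gen (Sig i) = tr i"
| "nu_gen (Rho i) = tr i"

definition chi :: "nat \<Rightarrow> vword set \<Rightarrow> (nat \<Rightarrow> nat) \<times> (nat \<Rightarrow> nat)" where
  "chi n = hom_from_gens n (M n) chi_gen"

definition nu :: "nat \<Rightarrow> vword set \<Rightarrow> nat \<Rightarrow> nat" where
  "nu n = hom_from_gens n (sym_group n) nu_gen"

text \<open>eta1(s_i) = 1, eta1(t_i) = (i i+1): projection to the second factor.
  eta2(s_i) = eta2(t_i) = (i i+1): (a, b) \<mapsto> a b.\<close>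
definition eta1 :: "(nat \<Rightarrow> nat) \<times> (nat \<Rightarrow> nat) \<Rightarrow> nat \<Rightarrow> nat" where
  "eta1 = (\<lambda>(a, b). b)"
definition eta2 :: "(nat \<Rightarrow> nat) \<times> (nat \<Rightarrow> nat) \<Rightarrow> nat \<Rightarrow> nat" where
  "eta2 = (\<lambda>(a, b). a \<circ> b)"

definition VP :: "nat \<Rightarrow> vword set set" where
  "VP n = kernel (VB n) (sym_group n) (nu n)"

end

theory Submission
  imports Defs
begin

text \<open>
  Both composites are computed on words: eta2 \<circ> chi sends every sigma i and rho i to the
  transposition (i i+1), so it agrees with nu; the map eta1 \<circ> chi kills every sigma i and sends
  rho i to (i i+1). Part (iii) follows because (a, b) \<in> M n is trivial exactly when b = 1 and
  a b = 1. For (i), the sigma i lie in the normal subgroup ker (eta1 \<circ> chi), hence so does H n.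
  Conversely, modulo any normal subgroup containing the sigma i, a word equals the word formed by its
  rho letters. If that word maps to 1 in S n, it is already trivial in VB n: the rho i satisfy
  the Coxeter relations of S n, and every word in rho 1, ..., rho (m-1) can be brought to the
  normal form u rho (m-1) rho (m-2) ... rho k with u a word in rho 1, ..., rho (m-2), whose
  image in S n sends k to m unless k = m.
\<close>

section \<open>The group VB n\<close>

lemma Sig_in_vb_letters: "1 \<le> i \<Longrightarrow> i < n \<Longrightarrow> (e, Sig i) \<in> vb_letters n"
  and Rho_in_vb_letters: "1 \<le> i \<Longrightarrow> i < n \<Longrightarrow> (e, Rho i) \<in> vb_letters n"
  unfolding vb_letters_def by blast+

lemma vb_relators_lists:
  "(l, r) \<in> vb_relators n \<Longrightarrow> l \<in> lists (vb_letters n) \<and> r \<in> lists (vb_letters n)"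
  unfolding vb_relators_def
  by (elim UnE; clarsimp simp del: One_nat_def;
      auto intro!: Sig_in_vb_letters Rho_in_vb_letters simp del: One_nat_def)

lemma linv_in_vb_letters: "a \<in> vb_letters n \<Longrightarrow> linv a \<in> vb_letters n"
  by (cases a) (auto simp: vb_letters_def)

lemma linv_linv [simp]: "linv (linv a) = a"
  by (cases a) auto

lemma vb_eq_lists: "vb_eq n u v \<Longrightarrow> u \<in> lists (vb_letters n) \<and> v \<in> lists (vb_letters n)"
proof (induction rule: vb_eq.induct)
  case (cancel a u v)
  then show ?case using linv_in_vb_letters by auto
qed (auto dest: vb_relators_lists)

lemma vb_eq_append_right:
  "vb_eq n u u' \<Longrightarrow> v \<in> lists (vb_letters n) \<Longrightarrow> vb_eq n (u @ v) (u' @ v)"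
proof (induction rule: vb_eq.induct)
  case (rel l r x y)
  then show ?case using vb_eq.rel[of l r n x "y @ v"] by simp
next
  case (cancel a x y)
  then show ?case using vb_eq.cancel[of a n x "y @ v"] by simp
next
  case (refl w)
  then show ?case by (intro vb_eq.refl) simp
qed (auto intro: vb_eq.sym vb_eq.trans)

lemma vb_eq_append_left:
  "vb_eq n u u' \<Longrightarrow> v \<in> lists (vb_letters n) \<Longrightarrow> vb_eq n (v @ u) (v @ u')"
proof (induction rule: vb_eq.induct)
  case (rel l r x y)
  then show ?case using vb_eq.rel[of l r n "v @ x" y] by simp
next
  case (cancel a x y)
  then show ?case using vb_eq.cancel[of a n "v @ x" y] by simp
next
  case (refl w)
  then show ?case by (intro vb_eq.refl) simp
qed (auto intro: vb_eq.sym vb_eq.trans)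

lemma vb_eq_append: "vb_eq n u u' \<Longrightarrow> vb_eq n v v' \<Longrightarrow> vb_eq n (u @ v) (u' @ v')"
  by (meson vb_eq.trans vb_eq_append_left vb_eq_append_right vb_eq_lists)

lemma vb_eq_context:
  "vb_eq n u u' \<Longrightarrow> x \<in> lists (vb_letters n) \<Longrightarrow> y \<in> lists (vb_letters n)
   \<Longrightarrow> vb_eq n (x @ u @ y) (x @ u' @ y)"
  by (simp add: vb_eq.refl vb_eq_append)

lemma vb_class_eqI:
  assumes "vb_eq n u v"
  shows "vb_class n u = vb_class n v"
proof -
  have "vb_eq n u x \<longleftrightarrow> vb_eq n v x" for x
    using assms vb_eq.sym[OF assms] vb_eq.trans by blast
  then show ?thesis by (simp add: vb_class_def)
qed

lemma vb_eq_rep: "u \<in> lists (vb_letters n) \<Longrightarrow> vb_eq n u (rep (vb_class n u))"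
  unfolding rep_def vb_class_def mem_Collect_eq by (rule someI) (rule vb_eq.refl)

lemma vb_class_in_carrier: "u \<in> lists (vb_letters n) \<Longrightarrow> vb_class n u \<in> carrier (VB n)"
  unfolding VB_def by simp

lemma VB_carrier_cases:
  assumes "X \<in> carrier (VB n)"
  obtains w where "X = vb_class n w" and "w \<in> lists (vb_letters n)"
  using assms unfolding VB_def by auto

lemma rep_in_lists: "X \<in> carrier (VB n) \<Longrightarrow> rep X \<in> lists (vb_letters n)"
  by (elim VB_carrier_cases) (use vb_eq_rep vb_eq_lists in blast)

lemma VB_one: "\<one>\<^bsub>VB n\<^esub> = vb_class n []"
  unfolding VB_def by simp

lemma VB_mult:
  "u \<in> lists (vb_letters n) \<Longrightarrow> v \<in> lists (vb_letters n) \<Longrightarrow>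
   vb_class n u \<otimes>\<^bsub>VB n\<^esub> vb_class n v = vb_class n (u @ v)"
  unfolding VB_def
  by (auto intro!: vb_class_eqI vb_eq_append vb_eq.sym[OF vb_eq_rep])

definition winv :: "vword \<Rightarrow> vword" where
  "winv w = rev (map linv w)"

lemma winv_lists: "w \<in> lists (vb_letters n) \<Longrightarrow> winv w \<in> lists (vb_letters n)"
  unfolding winv_def using linv_in_vb_letters by auto

lemma vb_eq_winv_append: "w \<in> lists (vb_letters n) \<Longrightarrow> vb_eq n (winv w @ w) []"
proof (induction w)
  case Nil
  then show ?case by (simp add: winv_def vb_eq.refl)
next
  case (Cons a w)
  have "vb_eq n (winv w @ [linv a, linv (linv a)] @ w) (winv w @ w)"
    using Cons.prems by (intro vb_eq.cancel) (auto simp: linv_in_vb_letters winv_lists)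
  then show ?case using Cons by (auto simp: winv_def intro: vb_eq.trans)
qed

lemma VB_group: "group (VB n)"
proof (rule groupI)
  fix x y assume "x \<in> carrier (VB n)" "y \<in> carrier (VB n)"
  then show "x \<otimes>\<^bsub>VB n\<^esub> y \<in> carrier (VB n)"
    by (elim VB_carrier_cases) (simp add: VB_mult vb_class_in_carrier)
next
  show "\<one>\<^bsub>VB n\<^esub> \<in> carrier (VB n)" by (simp add: VB_one vb_class_in_carrier)
next
  fix x y z assume "x \<in> carrier (VB n)" "y \<in> carrier (VB n)" "z \<in> carrier (VB n)"
  then show "x \<otimes>\<^bsub>VB n\<^esub> y \<otimes>\<^bsub>VB n\<^esub> z = x \<otimes>\<^bsub>VB n\<^esub> (y \<otimes>\<^bsub>VB n\<^esub> z)"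
    by (elim VB_carrier_cases) (simp add: VB_mult)
next
  fix x assume "x \<in> carrier (VB n)"
  then show "\<one>\<^bsub>VB n\<^esub> \<otimes>\<^bsub>VB n\<^esub> x = x"
    by (elim VB_carrier_cases) (simp add: VB_mult VB_one)
next
  fix x assume "x \<in> carrier (VB n)"
  then obtain w where w: "x = vb_class n w" "w \<in> lists (vb_letters n)"
    by (rule VB_carrier_cases)
  then have "vb_class n (winv w) \<otimes>\<^bsub>VB n\<^esub> x = \<one>\<^bsub>VB n\<^esub>"
    using vb_class_eqI[OF vb_eq_winv_append] by (simp add: VB_mult VB_one winv_lists)
  moreover have "vb_class n (winv w) \<in> carrier (VB n)"
    using w by (simp add: winv_lists vb_class_in_carrier)
  ultimately show "\<exists>y\<in>carrier (VB n). y \<otimes>\<^bsub>VB n\<^esub> x = \<one>\<^bsub>VB n\<^esub>" by blast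
qed

lemma VB_inv:
  assumes "w \<in> lists (vb_letters n)"
  shows "inv\<^bsub>VB n\<^esub> (vb_class n w) = vb_class n (winv w)"
proof (rule group.inv_equality[OF VB_group])
  show "vb_class n (winv w) \<otimes>\<^bsub>VB n\<^esub> vb_class n w = \<one>\<^bsub>VB n\<^esub>"
    using assms vb_class_eqI[OF vb_eq_winv_append] by (simp add: VB_mult VB_one winv_lists)
qed (use assms winv_lists vb_class_in_carrier in auto)

section \<open>Homomorphisms defined on generators\<close>

definition letter_eval :: "('a, 'm) monoid_scheme \<Rightarrow> (vgen \<Rightarrow> 'a) \<Rightarrow> vletter \<Rightarrow> 'a" where
  "letter_eval G f a = (case a of (e, g) \<Rightarrow> if e then inv\<^bsub>G\<^esub> f g else f g)"

lemma word_eval_Nil [simp]: "word_eval G f [] = \<one>\<^bsub>G\<^esub>"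
  by (simp add: word_eval_def)

lemma word_eval_Cons [simp]: "word_eval G f (a # w) = letter_eval G f a \<otimes>\<^bsub>G\<^esub> word_eval G f w"
  by (cases a) (simp add: word_eval_def letter_eval_def)

locale vb_images = group G for G (structure) and n :: nat and f :: "vgen \<Rightarrow> 'a" +
  assumes gen_closed: "(e, g) \<in> vb_letters n \<Longrightarrow> f g \<in> carrier G"
begin

lemma letter_eval_closed: "a \<in> vb_letters n \<Longrightarrow> letter_eval G f a \<in> carrier G"
  by (cases a) (auto simp: letter_eval_def dest: gen_closed)

lemma letter_eval_linv: "a \<in> vb_letters n \<Longrightarrow> letter_eval G f (linv a) = inv (letter_eval G f a)"
  by (cases a) (auto simp: letter_eval_def dest: gen_closed)

lemma word_eval_closed: "w \<in> lists (vb_letters n) \<Longrightarrow> word_eval G f w \<in> carrier G"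
  by (induction w) (simp_all add: letter_eval_closed)

lemma word_eval_append:
  "u \<in> lists (vb_letters n) \<Longrightarrow> v \<in> lists (vb_letters n) \<Longrightarrow>
   word_eval G f (u @ v) = word_eval G f u \<otimes> word_eval G f v"
  by (induction u) (simp_all add: letter_eval_closed word_eval_closed m_assoc)

lemma word_eval_cancel:
  "a \<in> vb_letters n \<Longrightarrow> w \<in> lists (vb_letters n) \<Longrightarrow>
   word_eval G f (a # linv a # w) = word_eval G f w"
  by (simp add: letter_eval_linv letter_eval_closed word_eval_closed m_assoc[symmetric])

lemma word_eval_hom:
  assumes "group K" and "h \<in> hom G K"
  shows "w \<in> lists (vb_letters n) \<Longrightarrow> h (word_eval G f w) = word_eval K (h \<circ> f) w"
proof -
  interpret group_hom G K h
    using assms by (simp add: group_hom_axioms_def group_hom_def is_group)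
  have "h (letter_eval G f a) = letter_eval K (h \<circ> f) a" if "a \<in> vb_letters n" for a
    using that by (cases a) (auto simp: letter_eval_def dest: gen_closed)
  then show "w \<in> lists (vb_letters n) \<Longrightarrow> h (word_eval G f w) = word_eval K (h \<circ> f) w"
    by (induction w) (simp_all add: letter_eval_closed word_eval_closed)
qed

end

locale vb_representation = vb_images +
  assumes relator_eval: "(l, r) \<in> vb_relators n \<Longrightarrow> word_eval G f l = word_eval G f r"
begin

lemma word_eval_vb_eq: "vb_eq n u v \<Longrightarrow> word_eval G f u = word_eval G f v"
proof (induction rule: vb_eq.induct)
  case (rel l r u v)
  then show ?case
    using vb_relators_lists[OF rel(1)] by (simp add: word_eval_append relator_eval)
next
  case (cancel a u v)
  then show ?case
    using word_eval_append[of u "[a, linv a] @ v"] word_eval_append[of u v]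
    by (simp add: word_eval_cancel linv_in_vb_letters del: word_eval_Cons)
qed simp_all

lemma hom_from_gens_class:
  "w \<in> lists (vb_letters n) \<Longrightarrow> hom_from_gens n G f (vb_class n w) = word_eval G f w"
  unfolding hom_from_gens_def by (metis vb_eq_rep word_eval_vb_eq)

lemma hom_from_gens_hom: "hom_from_gens n G f \<in> hom (VB n) G"
proof (rule homI)
  fix x assume "x \<in> carrier (VB n)"
  then show "hom_from_gens n G f x \<in> carrier G"
    by (elim VB_carrier_cases) (simp add: hom_from_gens_class word_eval_closed)
next
  fix x y assume "x \<in> carrier (VB n)" "y \<in> carrier (VB n)"
  then show "hom_from_gens n G f (x \<otimes>\<^bsub>VB n\<^esub> y) = hom_from_gens n G f x \<otimes> hom_from_gens n G f y"
    by (elim VB_carrier_cases) (simp add: VB_mult hom_from_gens_class word_eval_append)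
qed

end

section \<open>The group M n and the maps eta1, eta2\<close>

lemma M_group: "group (M n)"
proof (rule groupI)
  fix x y assume "x \<in> carrier (M n)" "y \<in> carrier (M n)"
  then show "x \<otimes>\<^bsub>M n\<^esub> y \<in> carrier (M n)"
    by (auto simp: M_def intro!: permutes_compose permutes_inv)
next
  show "\<one>\<^bsub>M n\<^esub> \<in> carrier (M n)" by (simp add: M_def permutes_id)
next
  fix x y z assume "x \<in> carrier (M n)" "y \<in> carrier (M n)" "z \<in> carrier (M n)"
  moreover obtain a b c d e f where "x = (a, b)" "y = (c, d)" "z = (e, f)"
    by (cases x, cases y, cases z)
  ultimately show "x \<otimes>\<^bsub>M n\<^esub> y \<otimes>\<^bsub>M n\<^esub> z = x \<otimes>\<^bsub>M n\<^esub> (y \<otimes>\<^bsub>M n\<^esub> z)"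
    by (auto simp: M_def fun_eq_iff o_inv_distrib permutes_bij permutes_inverses(2))
next
  fix x assume "x \<in> carrier (M n)"
  then show "\<one>\<^bsub>M n\<^esub> \<otimes>\<^bsub>M n\<^esub> x = x" by (auto simp: M_def)
next
  fix x assume x: "x \<in> carrier (M n)"
  obtain a b where ab: "x = (a, b)" by (cases x)
  have p: "a permutes {1..n}" "b permutes {1..n}" using x ab by (auto simp: M_def)
  let ?y = "(inv' b \<circ> inv' a \<circ> b, inv' b)"
  have "?y \<in> carrier (M n)" using p by (auto simp: M_def intro!: permutes_compose permutes_inv)
  moreover have "?y \<otimes>\<^bsub>M n\<^esub> x = \<one>\<^bsub>M n\<^esub>"
    using p by (auto simp: M_def ab fun_eq_iff permutes_inverses permutes_inv_inv)
  ultimately show "\<exists>y\<in>carrier (M n). y \<otimes>\<^bsub>M n\<^esub> x = \<one>\<^bsub>M n\<^esub>" by blast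
qed

lemma eta1_hom: "eta1 \<in> hom (M n) (sym_group n)"
  by (rule homI) (auto simp: M_def eta1_def sym_group_carrier sym_group_mult)

lemma eta2_hom: "eta2 \<in> hom (M n) (sym_group n)"
  by (rule homI)
    (auto simp: M_def eta2_def sym_group_carrier sym_group_mult fun_eq_iff
      permutes_compose permutes_inverses(2))

lemma eta1_eta2_eq_id_iff: "eta1 p = id \<and> eta2 p = id \<longleftrightarrow> p = \<one>\<^bsub>M n\<^esub>"
  by (cases p) (auto simp: eta1_def eta2_def M_def)

lemma chi_gen_images: "vb_images (M n) n chi_gen"
proof (intro vb_images.intro M_group vb_images_axioms.intro)
  show "chi_gen g \<in> carrier (M n)" if "(e, g) \<in> vb_letters n" for e g
    using that by (auto simp: vb_letters_def M_def s_el_def t_el_def intro!: permutes_swap_id)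
qed

lemma hom_chi:
  assumes "h \<in> hom (M n) (sym_group n)" and "x \<in> carrier (VB n)"
  shows "h (chi n x) = hom_from_gens n (sym_group n) (h \<circ> chi_gen) x"
  unfolding chi_def hom_from_gens_def
  using vb_images.word_eval_hom[OF chi_gen_images sym_group_is_group assms(1)]
    rep_in_lists[OF assms(2)] by blast

lemma nu_eq_eta2_chi:
  assumes "x \<in> carrier (VB n)"
  shows "nu n x = eta2 (chi n x)"
proof -
  have "eta2 \<circ> chi_gen = nu_gen"
  proof
    fix g show "(eta2 \<circ> chi_gen) g = nu_gen g"
      by (cases g) (simp_all add: eta2_def s_el_def t_el_def)
  qed
  then show ?thesis
    using hom_chi[OF eta2_hom assms] by (simp add: nu_def)
qed

lemma eta1_chi_gen_representation: "vb_representation (sym_group n) n (eta1 \<circ> chi_gen)"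
proof (intro vb_representation.intro vb_images.intro sym_group_is_group vb_images_axioms.intro
    vb_representation_axioms.intro)
  show "(eta1 \<circ> chi_gen) g \<in> carrier (sym_group n)" if "(e, g) \<in> vb_letters n" for e g
    using that by (auto simp: vb_letters_def sym_group_carrier eta1_def s_el_def t_el_def
        intro!: permutes_swap_id)
next
  show "word_eval (sym_group n) (eta1 \<circ> chi_gen) l = word_eval (sym_group n) (eta1 \<circ> chi_gen) r"
    if "(l, r) \<in> vb_relators n" for l r
    using that unfolding vb_relators_def
    by (elim UnE; clarsimp simp del: One_nat_def)
      (auto simp: sym_group_mult sym_group_one letter_eval_def eta1_def s_el_def t_el_def fun_eq_iff
        transpose_def)
qed

section \<open>Words in the generators rho\<close>

definition rho_word :: "nat list \<Rightarrow> vword" where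
  "rho_word xs = map (\<lambda>i. (False, Rho i)) xs"

definition tr_prod :: "nat list \<Rightarrow> nat \<Rightarrow> nat" where
  "tr_prod xs = foldr (\<lambda>i p. tr i \<circ> p) xs id"

lemma rho_word_simps [simp]:
  "rho_word [] = []"
  "rho_word (i # xs) = (False, Rho i) # rho_word xs"
  "rho_word (xs @ ys) = rho_word xs @ rho_word ys"
  by (simp_all add: rho_word_def)

lemma tr_prod_Nil [simp]: "tr_prod [] = id"
  and tr_prod_Cons [simp]: "tr_prod (i # xs) = tr i \<circ> tr_prod xs"
  by (simp_all add: tr_prod_def)

lemma tr_prod_append [simp]: "tr_prod (xs @ ys) = tr_prod xs \<circ> tr_prod ys"
  by (induction xs) (simp_all add: comp_assoc)

lemma rho_word_lists: "set xs \<subseteq> {1..<n} \<Longrightarrow> rho_word xs \<in> lists (vb_letters n)"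
  by (auto simp: rho_word_def subset_iff intro!: Rho_in_vb_letters)

lemma vb_eq_relator: "(l, r) \<in> vb_relators n \<Longrightarrow> vb_eq n l r"
  using vb_eq.rel[of l r n "[]" "[]"] by simp

lemma vb_eq_rho_square: "1 \<le> i \<Longrightarrow> i < n \<Longrightarrow> vb_eq n (rho_word [i, i]) (rho_word [])"
  by (rule vb_eq_relator) (auto simp: vb_relators_def)

lemma vb_eq_rho_commute:
  assumes "1 \<le> i" "i < n" "1 \<le> j" "j < n" "i + 2 \<le> j \<or> j + 2 \<le> i"
  shows "vb_eq n (rho_word [i, j]) (rho_word [j, i])"
  by (rule vb_eq_relator) (use assms in \<open>auto simp: vb_relators_def\<close>)

lemma vb_eq_rho_braid:
  "1 \<le> i \<Longrightarrow> i + 1 < n \<Longrightarrow> vb_eq n (rho_word [i, i + 1, i]) (rho_word [i + 1, i, i + 1])"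
  by (rule vb_eq_relator) (auto simp: vb_relators_def)

lemma vb_eq_rho_context:
  "vb_eq n (rho_word xs) (rho_word ys) \<Longrightarrow> set us \<subseteq> {1..<n} \<Longrightarrow> set vs \<subseteq> {1..<n}
   \<Longrightarrow> vb_eq n (rho_word (us @ xs @ vs)) (rho_word (us @ ys @ vs))"
  using vb_eq_context[of n "rho_word xs" "rho_word ys" "rho_word us" "rho_word vs"] rho_word_lists
  by simp

lemma vb_eq_rho_commute_past:
  "\<forall>j\<in>set ys. i + 2 \<le> j \<or> j + 2 \<le> i \<Longrightarrow> 1 \<le> i \<Longrightarrow> i < n \<Longrightarrow> set ys \<subseteq> {1..<n}
   \<Longrightarrow> vb_eq n (rho_word (ys @ [i])) (rho_word (i # ys))"
proof (induction ys)
  case Nil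
  then show ?case using vb_eq.refl[OF rho_word_lists[of "[i]" n]] by simp
next
  case (Cons y ys)
  have "vb_eq n (rho_word ([y] @ (ys @ [i]) @ [])) (rho_word ([y] @ (i # ys) @ []))"
    by (rule vb_eq_rho_context) (use Cons in auto)
  moreover have "vb_eq n (rho_word ([] @ [y, i] @ ys)) (rho_word ([] @ [i, y] @ ys))"
    by (rule vb_eq_rho_context) (use Cons vb_eq_rho_commute[of y n i] in auto)
  ultimately show ?case by (auto intro: vb_eq.trans)
qed

lemma vb_eq_rho_descending_slide:
  assumes "1 \<le> k" "k \<le> j" "j + 1 < m" "m \<le> n"
  shows "vb_eq n (rho_word (rev [k..<m] @ [j + 1])) (rho_word (j # rev [k..<m]))"
proof -
  define A where "A = rev [j + 2..<m]"
  define B where "B = rev [k..<j]"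
  have split: "rev [k..<m] = A @ [j + 1, j] @ B"
  proof -
    have "[k..<m] = [k..<j] @ [j..<m]" using assms upt_add_eq_append[of k j "m - j"] by simp
    moreover have "[j..<m] = j # (j + 1) # [j + 2..<m]" using assms by (simp add: upt_conv_Cons)
    ultimately show ?thesis unfolding A_def B_def by simp
  qed
  have A: "set A \<subseteq> {1..<n}" "\<forall>x\<in>set A. j + 2 \<le> x"
    and B: "set B \<subseteq> {1..<n}" "\<forall>x\<in>set B. x + 2 \<le> j + 1"
    using assms unfolding A_def B_def by auto
  have "vb_eq n (rho_word ((A @ [j + 1, j]) @ (B @ [j + 1]) @ []))
                 (rho_word ((A @ [j + 1, j]) @ ((j + 1) # B) @ []))"
    by (rule vb_eq_rho_context[OF vb_eq_rho_commute_past]) (use assms A B in auto)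
  moreover have "vb_eq n (rho_word (A @ [j + 1, j, j + 1] @ B)) (rho_word (A @ [j, j + 1, j] @ B))"
    by (rule vb_eq_rho_context[OF vb_eq.sym[OF vb_eq_rho_braid]]) (use assms A B in auto)
  moreover have "vb_eq n (rho_word ([] @ (A @ [j]) @ [j + 1, j] @ B))
                         (rho_word ([] @ (j # A) @ [j + 1, j] @ B))"
    by (rule vb_eq_rho_context[OF vb_eq_rho_commute_past]) (use assms A B in auto)
  ultimately show ?thesis unfolding split by (auto intro: vb_eq.trans)
qed

lemma vb_eq_rho_normal_form:
  "1 \<le> m \<Longrightarrow> m \<le> n \<Longrightarrow> set xs \<subseteq> {1..<m} \<Longrightarrow>
   \<exists>us k. set us \<subseteq> {1..<m - 1} \<and> 1 \<le> k \<and> k \<le> m \<and>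
     vb_eq n (rho_word xs) (rho_word (us @ rev [k..<m]))"
proof (induction xs rule: rev_induct)
  case Nil
  then show ?case using vb_eq.refl[of "[]" n] by (intro exI[of _ "[]"] exI[of _ m]) auto
next
  case (snoc i xs)
  then obtain us k where us: "set us \<subseteq> {1..<m - 1}" and k: "1 \<le> k" "k \<le> m"
    and xs: "vb_eq n (rho_word xs) (rho_word (us @ rev [k..<m]))"
    by auto
  have i: "1 \<le> i" "i < m" using snoc.prems by auto
  have us_n: "set us \<subseteq> {1..<n}" and desc_n: "set (rev [k..<m]) \<subseteq> {1..<n}"
    using us k snoc.prems by (auto simp: subset_iff)
  have step: "vb_eq n (rho_word (xs @ [i])) (rho_word (us @ rev [k..<m] @ [i]))"
    using vb_eq_append_right[OF xs rho_word_lists[of "[i]" n]] i snoc.prems by simp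
  consider "i + 1 < k" | "i + 1 = k" | "i = k" | "k < i" by linarith
  then show ?case
  proof cases
    case 1
    have "vb_eq n (rho_word (us @ (rev [k..<m] @ [i]) @ []))
                   (rho_word (us @ (i # rev [k..<m]) @ []))"
      by (rule vb_eq_rho_context[OF vb_eq_rho_commute_past]) (use 1 us_n desc_n i snoc in auto)
    then have "vb_eq n (rho_word (xs @ [i])) (rho_word ((us @ [i]) @ rev [k..<m]))"
      using step vb_eq.trans by fastforce
    moreover have "set (us @ [i]) \<subseteq> {1..<m - 1}" using us 1 i k by auto
    ultimately show ?thesis using k by blast
  next
    case 2
    then have "rev [k..<m] @ [i] = rev [i..<m]" using i by (simp add: upt_conv_Cons)
    then show ?thesis using step us i
      by (intro exI[of _ us] exI[of _ i]) auto
  next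
    case 3
    then have "rev [k..<m] @ [i] = rev [k + 1..<m] @ [k, k]" using i by (simp add: upt_conv_Cons)
    moreover have "vb_eq n (rho_word ((us @ rev [k + 1..<m]) @ [k, k] @ []))
                           (rho_word ((us @ rev [k + 1..<m]) @ [] @ []))"
      by (rule vb_eq_rho_context[OF vb_eq_rho_square]) (use us_n desc_n i 3 snoc.prems in auto)
    ultimately have "vb_eq n (rho_word (xs @ [i])) (rho_word (us @ rev [k + 1..<m]))"
      using step vb_eq.trans by fastforce
    then show ?thesis using us i 3 by (intro exI[of _ us] exI[of _ "k + 1"]) auto
  next
    case 4
    have "vb_eq n (rho_word (us @ (rev [k..<m] @ [(i - 1) + 1]) @ []))
                   (rho_word (us @ ((i - 1) # rev [k..<m]) @ []))"
      by (rule vb_eq_rho_context[OF vb_eq_rho_descending_slide]) (use 4 k i us_n snoc.prems in auto)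
    then have "vb_eq n (rho_word (xs @ [i])) (rho_word ((us @ [i - 1]) @ rev [k..<m]))"
      using step vb_eq.trans 4 by fastforce
    moreover have "set (us @ [i - 1]) \<subseteq> {1..<m - 1}" using us 4 k i by auto
    ultimately show ?thesis using k by blast
  qed
qed

lemma word_eval_rho_word: "word_eval (sym_group n) (eta1 \<circ> chi_gen) (rho_word xs) = tr_prod xs"
  by (induction xs) (simp_all add: letter_eval_def sym_group_mult sym_group_one eta1_def t_el_def)

lemma tr_prod_vb_eq: "vb_eq n (rho_word xs) (rho_word ys) \<Longrightarrow> tr_prod xs = tr_prod ys"
  using vb_representation.word_eval_vb_eq[OF eta1_chi_gen_representation] word_eval_rho_word
  by metis

lemma tr_prod_descending: "k \<le> m \<Longrightarrow> tr_prod (rev [k..<m]) k = m"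
proof (induction "m - k" arbitrary: k)
  case (Suc d)
  then have "rev [k..<m] = rev [Suc k..<m] @ [k]" by (simp add: upt_conv_Cons)
  then show ?case using Suc by simp
qed simp

lemma tr_prod_fixes: "set us \<subseteq> {1..<m - 1} \<Longrightarrow> tr_prod us m = m"
  by (induction us) (auto simp: transpose_def)

lemma vb_eq_rho_word_trivial:
  "m \<le> n \<Longrightarrow> set xs \<subseteq> {1..<m} \<Longrightarrow> tr_prod xs = id \<Longrightarrow> vb_eq n (rho_word xs) []"
proof (induction m arbitrary: xs)
  case 0
  then show ?case using vb_eq.refl[of "[]" n] by simp
next
  case (Suc m)
  obtain us k where us: "set us \<subseteq> {1..<m}" and k: "1 \<le> k" "k \<le> Suc m"
    and xs: "vb_eq n (rho_word xs) (rho_word (us @ rev [k..<Suc m]))"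
    using vb_eq_rho_normal_form[of "Suc m" n xs] Suc.prems by auto
  have "tr_prod (us @ rev [k..<Suc m]) = id"
    using tr_prod_vb_eq[OF xs] Suc.prems(3) by metis
  moreover have "tr_prod (us @ rev [k..<Suc m]) k = Suc m"
    using tr_prod_descending[OF k(2)] tr_prod_fixes[of us "Suc m"] us by simp
  ultimately have "k = Suc m" by (metis id_apply)
  with xs have "vb_eq n (rho_word xs) (rho_word us)" and "tr_prod us = id"
    using \<open>tr_prod (us @ _) = id\<close> by simp_all
  moreover have "vb_eq n (rho_word us) []"
    using Suc.IH[of us] Suc.prems(1) us \<open>tr_prod us = id\<close> by simp
  ultimately show ?case by (blast intro: vb_eq.trans)
qed

section \<open>The normal closure of the sigmas\<close>

fun rho_indices :: "vword \<Rightarrow> nat list" where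
  "rho_indices [] = []"
| "rho_indices ((e, Sig i) # w) = rho_indices w"
| "rho_indices ((e, Rho i) # w) = i # rho_indices w"

lemma rho_indices_range: "w \<in> lists (vb_letters n) \<Longrightarrow> set (rho_indices w) \<subseteq> {1..<n}"
  by (induction w rule: rho_indices.induct) (auto simp: vb_letters_def)

lemma vb_eq_Rho_letter:
  assumes "1 \<le> i" "i < n"
  shows "vb_eq n [(e, Rho i)] (rho_word [i])"
proof (cases e)
  case True
  have l: "(True, Rho i) \<in> vb_letters n" "(False, Rho i) \<in> vb_letters n"
    using assms by (auto intro: Rho_in_vb_letters)
  have "vb_eq n ([(True, Rho i)] @ rho_word [] @ []) ([(True, Rho i)] @ rho_word [i, i] @ [])"
    using l by (intro vb_eq_context vb_eq.sym[OF vb_eq_rho_square[OF assms]]) auto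
  moreover have "vb_eq n ([] @ [(True, Rho i), linv (True, Rho i)] @ [(False, Rho i)]) ([] @ [(False, Rho i)])"
    using l by (intro vb_eq.cancel) auto
  ultimately show ?thesis using True vb_eq.trans by fastforce
next
  case False
  then show ?thesis using vb_eq.refl Rho_in_vb_letters[OF assms] by fastforce
qed

lemma hom_vb_class_rho_indices:
  assumes "group K" and h: "h \<in> hom (VB n) K"
    and sigma: "\<And>i. 1 \<le> i \<Longrightarrow> i < n \<Longrightarrow> h (vsigma n i) = \<one>\<^bsub>K\<^esub>"
  shows "w \<in> lists (vb_letters n) \<Longrightarrow> h (vb_class n w) = h (vb_class n (rho_word (rho_indices w)))"
proof (induction w rule: rho_indices.induct)
  interpret group_hom "VB n" K h
    using assms by (simp add: group_hom_axioms_def group_hom_def VB_group)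
  {
    case (2 e i w)
    then have i: "1 \<le> i" "i < n" and w: "w \<in> lists (vb_letters n)"
      by (auto simp: vb_letters_def)
    have "h (vb_class n [(e, Sig i)]) = \<one>\<^bsub>K\<^esub>"
      using sigma[OF i] VB_inv[of "sg i" n, symmetric] Sig_in_vb_letters[OF i]
      by (cases e) (auto simp: vsigma_def winv_def vb_class_in_carrier)
    then show ?case
      using 2 w VB_mult[of "[(e, Sig i)]" n w, symmetric] Sig_in_vb_letters[OF i]
        hom_closed[OF vb_class_in_carrier[OF w]]
      by (simp add: vb_class_in_carrier)
  next
    case (3 e i w)
    then have i: "1 \<le> i" "i < n" and w: "w \<in> lists (vb_letters n)"
      by (auto simp: vb_letters_def)
    have "h (vb_class n ((e, Rho i) # w)) = h (vb_class n [(e, Rho i)]) \<otimes>\<^bsub>K\<^esub> h (vb_class n w)"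
      using VB_mult[of "[(e, Rho i)]" n w, symmetric] w Rho_in_vb_letters[OF i]
      by (simp add: vb_class_in_carrier)
    also have "\<dots> = h (vb_class n (rho_word [i])) \<otimes>\<^bsub>K\<^esub> h (vb_class n (rho_word (rho_indices w)))"
      using 3 w vb_class_eqI[OF vb_eq_Rho_letter[OF i, where e = e]] by simp
    also have "\<dots> = h (vb_class n (rho_word (i # rho_indices w)))"
      using VB_mult[of "rho_word [i]" n "rho_word (rho_indices w)", symmetric]
        rho_word_lists[OF rho_indices_range[OF w]] Rho_in_vb_letters[OF i]
      by (simp add: vb_class_in_carrier)
    finally show ?case by simp
  }
qed simp

lemma eta1_chi_gen_vsigma:
  assumes "1 \<le> i" "i < n"
  shows "hom_from_gens n (sym_group n) (eta1 \<circ> chi_gen) (vsigma n i) = id"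
proof -
  interpret vb_representation "sym_group n" n "eta1 \<circ> chi_gen"
    by (rule eta1_chi_gen_representation)
  show ?thesis
    using hom_from_gens_class[of "sg i"] Sig_in_vb_letters[OF assms]
    by (simp add: vsigma_def letter_eval_def eta1_def s_el_def sym_group_mult sym_group_one)
qed

lemma normal_closure_subset_kernel:
  "H_sub n \<subseteq> kernel (VB n) (sym_group n) (hom_from_gens n (sym_group n) (eta1 \<circ> chi_gen))"
proof -
  interpret vb_representation "sym_group n" n "eta1 \<circ> chi_gen"
    by (rule eta1_chi_gen_representation)
  have "kernel (VB n) (sym_group n) (hom_from_gens n (sym_group n) (eta1 \<circ> chi_gen)) \<lhd> VB n"
    by (intro group_hom.normal_kernel group_hom.intro group_hom_axioms.intro VB_group
        sym_group_is_group hom_from_gens_hom)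
  moreover have "vsigma n i \<in> kernel (VB n) (sym_group n) (hom_from_gens n (sym_group n) (eta1 \<circ> chi_gen))"
    if "1 \<le> i" "i < n" for i
    using that vb_class_in_carrier[of "sg i" n] Sig_in_vb_letters[OF that]
    by (simp add: kernel_def eta1_chi_gen_vsigma sym_group_one flip: vsigma_def)
  ultimately show ?thesis unfolding H_sub_def normal_closure_def by blast
qed

lemma kernel_subset_normal_closure:
  "kernel (VB n) (sym_group n) (hom_from_gens n (sym_group n) (eta1 \<circ> chi_gen)) \<subseteq> H_sub n"
proof
  interpret vb_representation "sym_group n" n "eta1 \<circ> chi_gen"
    by (rule eta1_chi_gen_representation)
  fix x assume "x \<in> kernel (VB n) (sym_group n) (hom_from_gens n (sym_group n) (eta1 \<circ> chi_gen))"
  then have x: "x \<in> carrier (VB n)" and ker: "hom_from_gens n (sym_group n) (eta1 \<circ> chi_gen) x = id"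
    by (simp_all add: kernel_def sym_group_one)
  obtain w where w: "x = vb_class n w" "w \<in> lists (vb_letters n)"
    using x by (rule VB_carrier_cases)
  define xs where "xs = rho_indices w"
  have xs: "set xs \<subseteq> {1..<n}"
    unfolding xs_def by (rule rho_indices_range[OF w(2)])
  have "hom_from_gens n (sym_group n) (eta1 \<circ> chi_gen) x
      = hom_from_gens n (sym_group n) (eta1 \<circ> chi_gen) (vb_class n (rho_word xs))"
    unfolding w(1) xs_def
    by (rule hom_vb_class_rho_indices[OF sym_group_is_group hom_from_gens_hom _ w(2)])
      (simp add: eta1_chi_gen_vsigma sym_group_one)
  also have "\<dots> = tr_prod xs"
    by (simp add: hom_from_gens_class rho_word_lists[OF xs] word_eval_rho_word)
  finally have "vb_eq n (rho_word xs) []"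
    using vb_eq_rho_word_trivial[of n n xs] xs ker by simp
  then have trivial: "vb_class n (rho_word xs) = \<one>\<^bsub>VB n\<^esub>"
    by (simp add: VB_one vb_class_eqI)
  show "x \<in> H_sub n"
    unfolding H_sub_def normal_closure_def
  proof (rule InterI)
    fix N assume "N \<in> {N. N \<lhd> VB n \<and> {vsigma n i | i. 1 \<le> i \<and> i < n} \<subseteq> N}"
    then have N: "N \<lhd> VB n" and sigma: "{vsigma n i | i. 1 \<le> i \<and> i < n} \<subseteq> N"
      by auto
    interpret normal N "VB n" by (rule N)
    have "N #>\<^bsub>VB n\<^esub> vsigma n i = \<one>\<^bsub>VB n Mod N\<^esub>" if "1 \<le> i" "i < n" for i
      using that sigma rcos_const[OF is_group] by auto
    then have "N #>\<^bsub>VB n\<^esub> x = N #>\<^bsub>VB n\<^esub> vb_class n (rho_word xs)"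
      using hom_vb_class_rho_indices[OF factorgroup_is_group r_coset_hom_Mod _ w(2)]
      by (simp add: w(1) xs_def)
    also have "\<dots> = N"
      by (simp add: trivial subset)
    finally show "x \<in> N"
      using rcos_self[OF x subgroup_axioms] by simp
  qed
qed

lemma kernel_cong:
  "(\<And>x. x \<in> carrier G \<Longrightarrow> f x = g x) \<Longrightarrow> kernel G H f = kernel G H g"
  by (auto simp: kernel_def)

lemma kernel_chi:
  "kernel (VB n) (M n) (chi n)
   = kernel (VB n) (sym_group n) (eta1 \<circ> chi n) \<inter> kernel (VB n) (sym_group n) (eta2 \<circ> chi n)"
  using eta1_eta2_eq_id_iff by (auto simp: kernel_def sym_group_one)

theorem proposition7p3:
  fixes n :: nat
  shows "H_sub n = kernel (VB n) (sym_group n) (eta1 \<circ> chi n)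
       \<and> VP n = kernel (VB n) (sym_group n) (eta2 \<circ> chi n)
       \<and> H_sub n \<inter> VP n = kernel (VB n) (M n) (chi n)"
proof -
  have "kernel (VB n) (sym_group n) (eta1 \<circ> chi n)
      = kernel (VB n) (sym_group n) (hom_from_gens n (sym_group n) (eta1 \<circ> chi_gen))"
    by (rule kernel_cong) (simp add: hom_chi[OF eta1_hom])
  then have i: "H_sub n = kernel (VB n) (sym_group n) (eta1 \<circ> chi n)"
    using normal_closure_subset_kernel kernel_subset_normal_closure by blast
  have ii: "VP n = kernel (VB n) (sym_group n) (eta2 \<circ> chi n)"
    unfolding VP_def by (rule kernel_cong) (simp add: nu_eq_eta2_chi)
  show ?thesis
    using i ii kernel_chi by simp
qed

end
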